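(* Let $G$ be an abelian Hausdorff topological group and $A\subseteq G$ with $0\notin A$. The following are equivalent: (i) $A$ is absolutely summable in $G$; (ii) the Kalton map $K_A:S_A\to G$ is continuous and its continuous extension $\overline{K_A}:P_A\to\overline{G}$ satisfies $\overline{K_A}(P_A)\subseteq G$. Furthermore, if these equivalent conditions hold, then $\overline{K_A}(h)=\sum_{a\in A}K_A(h_a)$ for every $h=\{h_a\}_{a\in A}\in P_A$ (the sum taken in the sense of summability of the indexed family $\{K_A(h_a)\}_{a\in A}$ in $G$).
   Context: $\overline{H}$ denotes the completion of a topological group $H$. For $a\in G$, $\langle a\rangle$ is the cyclic subgroup generated by $a$ with the subspace topology. $P_A=\prod_{a\in A}\langle a\rangle$ has the Tychonoff product topology and $S_A=\bigoplus_{a\in A}\langle a\rangle\subseteq P_A$ the subspace topology; the summand $\langle a\rangle$ of $S_A$ is identified with the corresponding coordinate subgroup. The Kalton map $K_A:S_A\to G$ is the unique homomorphism extending each inclusion $\langle a\rangle\to G$. When $K_A$ is continuous it extends uniquely to a continuous homomorphism $\overline{S_A}\to\overline{G}$; as $\overline{S_A}=\prod_{a\in A}\overline{\langle a\rangle}\supseteq P_A$, its restriction to $P_A$ is denoted $\overline{K_A}$. An indexed family $\{x_a:a\in A\}$ has sum $g=\sum_{a\in A}x_a$ if for every neighbourhood $U$ of $0$ there is a finite $F\subseteq A$ with $g-\sum_{a\in E}x_a\in U$ for every finite $E\subseteq A$ containing $F$. $A$ is absolutely summable if for every family $\{z_a:a\in A\}$ of integers the family $\{z_aa:a\in A\}$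 has a sum in $G$. *)

theory Defs
  imports "HOL-Analysis.Analysis"
begin

definition zsmult :: "int \<Rightarrow> 'a::ab_group_add \<Rightarrow> 'a" where
  "zsmult n a = (if 0 \<le> n then (\<Sum>_<nat n. a) else - (\<Sum>_<nat (-n). a))"

definition cyc :: "'a::ab_group_add \<Rightarrow> 'a set" where
  "cyc a = range (\<lambda>n::int. zsmult n a)"

definition PA :: "'a::{topological_ab_group_add} set \<Rightarrow> ('a \<Rightarrow> 'a) topology" where
  "PA A = product_topology (\<lambda>a. subtopology euclidean (cyc a)) A"

definition SA :: "'a::{topological_ab_group_add} set \<Rightarrow> ('a \<Rightarrow> 'a) set" where
  "SA A = {h \<in> topspace (PA A). finite {a \<in> A. h a \<noteq> 0}}"

definition kalton :: "'a::ab_group_add set \<Rightarrow> ('a \<Rightarrow> 'a) \<Rightarrow> 'a" where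
  "kalton A h = (\<Sum>a\<in>{a \<in> A. h a \<noteq> 0}. h a)"

definition coord :: "'a::ab_group_add set \<Rightarrow> 'a \<Rightarrow> 'a \<Rightarrow> ('a \<Rightarrow> 'a)" where
  "coord A a x = (\<lambda>b. if b \<in> A then (if b = a then x else 0) else undefined)"

definition abs_summable :: "'a::{topological_ab_group_add} set \<Rightarrow> bool" where
  "abs_summable A \<longleftrightarrow> (\<forall>z::'a \<Rightarrow> int. \<exists>g. ((\<lambda>a. zsmult (z a) a) has_sum g) A)"

definition group_cauchy :: "'a::topological_ab_group_add filter \<Rightarrow> bool" where
  "group_cauchy F \<longleftrightarrow>
     (\<forall>U. open U \<and> 0 \<in> U \<longrightarrow> (\<forall>\<^sub>F p in F \<times>\<^sub>F F. fst p - snd p \<in> U))"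

definition complete_group :: "'a::topological_ab_group_add itself \<Rightarrow> bool" where
  "complete_group _ \<longleftrightarrow>
     (\<forall>F::'a filter. F \<noteq> bot \<and> group_cauchy F \<longrightarrow> (\<exists>x. F \<le> nhds x))"

text \<open>j : G \<rightarrow> H is a completion of G: H is a complete Hausdorff abelian group
  (Hausdorff via the type class), j is an injective continuous homomorphism that is a
  topological embedding, and j(G) is dense in H.\<close>
definition is_completion ::
  "('a::topological_ab_group_add \<Rightarrow> 'b::{topological_ab_group_add,t2_space}) \<Rightarrow> bool" where
  "is_completion j \<longleftrightarrow> complete_group TYPE('b) \<and> (\<forall>x y. j (x + y) = j x + j y) \<and> inj j \<and>
     homeomorphic_map euclidean (subtopology euclidean (range j)) j \<and> closure (range j) = UNIV"

definition kalton_ext ::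
  "'a::topological_ab_group_add set \<Rightarrow> ('a \<Rightarrow> 'b::topological_ab_group_add) \<Rightarrow> (('a \<Rightarrow> 'a) \<Rightarrow> 'b) \<Rightarrow> bool" where
  "kalton_ext A j g \<longleftrightarrow> continuous_map (PA A) euclidean g \<and> (\<forall>h \<in> SA A. g h = j (kalton A h))"

end

theory Submission
  imports Defs
begin

text \<open>If \<open>A\<close> is absolutely summable, every family \<open>h\<close> in \<open>P\<^sub>A\<close> is summable, and a
  diagonal argument shows that beyond a single finite set of coordinates the tails of all these
  families are small simultaneously. Hence \<open>h \<mapsto> \<Sum>h\<close> is continuous on \<open>P\<^sub>A\<close>; composed with the
  embedding \<open>j\<close> it is the continuous extension of the Kalton map, with values in \<open>j(G)\<close>.
  Conversely, a continuous extension \<open>g\<close> is the limit of its values on the finite truncations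
  of \<open>h\<close>, i.e. of \<open>j\<close> applied to the finite partial sums of \<open>h\<close>; if \<open>g h = j s\<close>, the partial sums
  converge to \<open>s\<close> because \<open>j\<close> is an embedding. For \<open>h a = z\<^sub>a a\<close> this is absolute summability.\<close>

lemma zero_nhd_add_subset:
  fixes U :: "'a::topological_group_add set"
  assumes "open U" "0 \<in> U"
  obtains V where "open V" "0 \<in> V" "\<And>x y. x \<in> V \<Longrightarrow> y \<in> V \<Longrightarrow> x + y \<in> U"
proof -
  have "open ((\<lambda>p::'a \<times> 'a. fst p + snd p) -` U)"
    by (rule open_vimage[OF assms(1)]) (intro continuous_intros)
  moreover have "(0, 0) \<in> (\<lambda>p::'a \<times> 'a. fst p + snd p) -` U"
    using assms(2) by simp
  ultimately obtain X Y where "open X" "open Y" "(0, 0) \<in> X \<times> Y"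
    "X \<times> Y \<subseteq> (\<lambda>p::'a \<times> 'a. fst p + snd p) -` U"
    by (rule open_prod_elim)
  then show thesis by (intro that[of "X \<inter> Y"]) auto
qed

lemma zero_nhd_add_diff_subset:
  fixes U :: "'a::topological_group_add set"
  assumes "open U" "0 \<in> U"
  obtains D where "open D" "0 \<in> D"
    "\<And>x y z. x \<in> D \<Longrightarrow> y \<in> D \<Longrightarrow> z \<in> D \<Longrightarrow> x + y - z \<in> U"
proof -
  obtain V where V: "open V" "0 \<in> V" "\<And>x y. x \<in> V \<Longrightarrow> y \<in> V \<Longrightarrow> x + y \<in> U"
    using zero_nhd_add_subset[OF assms] by blast
  obtain V' where V': "open V'" "0 \<in> V'" "\<And>x y. x \<in> V' \<Longrightarrow> y \<in> V' \<Longrightarrow> x + y \<in> V"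
    using zero_nhd_add_subset[OF V(1,2)] by blast
  define D where "D = V' \<inter> uminus -` V'"
  have "open D"
    unfolding D_def by (intro open_Int V'(1) open_vimage) (intro continuous_intros)
  moreover have "0 \<in> D"
    using V'(2) by (simp add: D_def)
  moreover have "x + y - z \<in> U" if "x \<in> D" "y \<in> D" "z \<in> D" for x y z
  proof -
    have "x + y \<in> V"
      using that V'(3) by (simp add: D_def)
    moreover have "- z \<in> V"
      using that V'(2) V'(3)[of "- z" 0] by (simp add: D_def)
    ultimately show ?thesis
      using V(3)[of "x + y" "- z"] by simp
  qed
  ultimately show thesis by (rule that)
qed

lemma zero_nhd_closure_subset:
  fixes D :: "'a::topological_group_add set"
  assumes "open D" "0 \<in> D"
  obtains W where "open W" "0 \<in> W" "closure W \<subseteq> D"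
proof -
  obtain V where V: "open V" "0 \<in> V" "\<And>x y. x \<in> V \<Longrightarrow> y \<in> V \<Longrightarrow> x + y \<in> D"
    using zero_nhd_add_subset[OF assms] by blast
  have "x \<in> D" if x: "x \<in> closure V" for x
  proof -
    have "open ((\<lambda>v. - v + x) -` V)"
      by (rule open_vimage[OF V(1)]) (intro continuous_intros)
    moreover have "x \<in> (\<lambda>v. - v + x) -` V"
      using V(2) by simp
    ultimately have "V \<inter> (\<lambda>v. - v + x) -` V \<noteq> {}"
      using closure_iff_nhds_not_empty[THEN iffD1, rule_format, OF x subset_refl] by blast
    then obtain v where "v \<in> V" "- v + x \<in> V" by blast
    then show ?thesis
      using V(3)[of v "- v + x"] by simp
  qed
  then show thesis using V(1,2) by (intro that[of V]) auto
qed

lemma summable_on_imp_cauchy_tail: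
  fixes h :: "'b \<Rightarrow> 'a::topological_ab_group_add"
  assumes "h summable_on A" "open W" "0 \<in> W"
  obtains F where "finite F" "F \<subseteq> A" "\<And>E. finite E \<Longrightarrow> E \<subseteq> A - F \<Longrightarrow> sum h E \<in> W"
proof -
  obtain s where "(sum h \<longlongrightarrow> s) (finite_subsets_at_top A)"
    using assms(1) unfolding summable_on_def has_sum_def by blast
  then have lim: "((\<lambda>E. sum h E - s) \<longlongrightarrow> 0) (finite_subsets_at_top A)"
    using tendsto_diff[OF _ tendsto_const, of "sum h" s _ s] by simp
  obtain D where D: "open D" "0 \<in> D"
    "\<And>x y z. x \<in> D \<Longrightarrow> y \<in> D \<Longrightarrow> z \<in> D \<Longrightarrow> x + y - z \<in> W"
    using zero_nhd_add_diff_subset[OF assms(2,3)] by blast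
  have "eventually (\<lambda>E. sum h E - s \<in> D) (finite_subsets_at_top A)"
    by (rule topological_tendstoD[OF lim D(1,2)])
  then obtain F where F: "finite F" "F \<subseteq> A"
    "\<forall>Y. finite Y \<and> F \<subseteq> Y \<and> Y \<subseteq> A \<longrightarrow> sum h Y - s \<in> D"
    unfolding eventually_finite_subsets_at_top by blast
  have "sum h E \<in> W" if "finite E" "E \<subseteq> A - F" for E
  proof -
    have "sum h (F \<union> E) - s \<in> D" "sum h F - s \<in> D"
      using F that by auto
    then have "(sum h (F \<union> E) - s) + 0 - (sum h F - s) \<in> W"
      using D(2,3) by blast
    moreover have "sum h (F \<union> E) = sum h F + sum h E"
      using F(1) that by (intro sum.union_disjoint) auto
    ultimately show ?thesis by (simp add: algebra_simps)
  qed
  then show thesis by (rule that[OF F(1,2)])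
qed

lemma disjoint_sequence_of_finite_subsets:
  assumes "\<And>F. finite F \<Longrightarrow> F \<subseteq> A \<Longrightarrow> \<exists>E. finite E \<and> E \<subseteq> A - F \<and> Q E"
  obtains E :: "nat \<Rightarrow> 'a set"
  where "disjoint_family E" "\<And>n. finite (E n)" "\<And>n. E n \<subseteq> A" "\<And>n. Q (E n)"
proof -
  have "\<forall>F. \<exists>E. finite F \<and> F \<subseteq> A \<longrightarrow> finite E \<and> E \<subseteq> A - F \<and> Q E"
    using assms by blast
  then obtain P where P: "\<And>F. finite F \<Longrightarrow> F \<subseteq> A \<Longrightarrow> finite (P F) \<and> P F \<subseteq> A - F \<and> Q (P F)"
    by metis
  define G where "G = rec_nat {} (\<lambda>_ F. F \<union> P F)"
  have G_0: "G 0 = {}" and G_Suc: "\<And>n. G (Suc n) = G n \<union> P (G n)"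
    by (simp_all add: G_def)
  have G: "finite (G n) \<and> G n \<subseteq> A" for n
  proof (induction n)
    case 0
    then show ?case by (simp add: G_0)
  next
    case (Suc n)
    then show ?case using P[of "G n"] by (auto simp: G_Suc)
  qed
  have G_mono: "G m \<subseteq> G n" if "m \<le> n" for m n
    using lift_Suc_mono_le[of G, OF _ that] by (auto simp: G_Suc)
  have "P (G m) \<inter> P (G n) = {}" if "m < n" for m n
  proof -
    have "P (G m) \<subseteq> G n"
      using G_mono[of "Suc m" n] that by (auto simp: G_Suc)
    moreover have "P (G n) \<inter> G n = {}"
      using P[of "G n"] G[of n] by blast
    ultimately show ?thesis by blast
  qed
  then have "disjoint_family (\<lambda>n. P (G n))"
    unfolding disjoint_family_on_def by (metis Int_commute linorder_neq_iff)
  moreover have "finite (P (G n))" "P (G n) \<subseteq> A" "Q (P (G n))" for n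
    using P[of "G n"] G[of n] by auto
  ultimately show thesis by (rule that)
qed

lemma disjoint_family_finite_meets:
  assumes "disjoint_family E" "finite F"
  shows "finite {n. E n \<inter> F \<noteq> {}}"
proof -
  have "{n. x \<in> E n} \<subseteq> {SOME n. x \<in> E n}" for x
  proof
    fix n assume "n \<in> {n. x \<in> E n}"
    then have "x \<in> E n" "x \<in> E (SOME n. x \<in> E n)"
      by (auto intro: someI)
    then show "n \<in> {SOME n. x \<in> E n}"
      using assms(1) by (auto simp: disjoint_family_on_def)
  qed
  then have "finite (\<Union>x\<in>F. {n. x \<in> E n})"
    using assms(2) by (auto intro: finite_subset)
  moreover have "{n. E n \<inter> F \<noteq> {}} = (\<Union>x\<in>F. {n. x \<in> E n})"
    by auto
  ultimately show ?thesis by simp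
qed

lemma zero_cyc: "0 \<in> cyc a"
  unfolding cyc_def zsmult_def by (rule image_eqI[of _ _ 0]) auto

lemma abs_summable_summable_on:
  assumes "abs_summable A" "h \<in> Pi A cyc"
  shows "h summable_on A"
proof -
  have "\<forall>a\<in>A. \<exists>n. h a = zsmult n a"
    using assms(2) unfolding cyc_def Pi_def by blast
  then obtain z where z: "\<forall>a\<in>A. h a = zsmult (z a) a"
    by metis
  obtain g where "((\<lambda>a. zsmult (z a) a) has_sum g) A"
    using assms(1) unfolding abs_summable_def by blast
  then have "(h has_sum g) A"
    using z has_sum_cong by (metis (mono_tags, lifting))
  then show ?thesis unfolding summable_on_def by blast
qed

lemma abs_summable_uniform_tail:
  fixes A :: "'a::topological_ab_group_add set"
  assumes "abs_summable A" "open W" "0 \<in> W"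
  shows "\<exists>F. finite F \<and> F \<subseteq> A \<and>
    (\<forall>E h. finite E \<and> E \<subseteq> A - F \<and> h \<in> Pi E cyc \<longrightarrow> sum h E \<in> W)"
proof (rule ccontr)
  txt \<open>Escaping blocks can be chosen pairwise disjoint; glued together they form one family
    in \<open>Pi A cyc\<close>, whose Cauchy set meets only finitely many of the blocks.\<close>
  assume no_tail: "\<not> ?thesis"
  have escape: "\<exists>E. finite E \<and> E \<subseteq> A - F \<and> (\<exists>h \<in> Pi E cyc. sum h E \<notin> W)"
    if "finite F" "F \<subseteq> A" for F
  proof -
    have "\<not> (\<forall>E h. finite E \<and> E \<subseteq> A - F \<and> h \<in> Pi E cyc \<longrightarrow> sum h E \<in> W)"
      using no_tail that by blast
    then show ?thesis by blast
  qed
  obtain E :: "nat \<Rightarrow> 'a set" where E: "disjoint_family E" "\<And>n. finite (E n)" "\<And>n. E n \<subseteq> A"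
    "\<And>n. \<exists>h \<in> Pi (E n) cyc. sum h (E n) \<notin> W"
    using disjoint_sequence_of_finite_subsets[OF escape] by blast
  obtain H where H: "\<And>n. H n \<in> Pi (E n) cyc" "\<And>n. sum (H n) (E n) \<notin> W"
    using E(4) by metis
  define k where "k a = (if \<exists>n. a \<in> E n then H (SOME n. a \<in> E n) a else 0)" for a
  have k_eq: "k a = H n a" if "a \<in> E n" for a n
  proof -
    have "a \<in> E (SOME n. a \<in> E n)"
      using that by (rule someI)
    then have "(SOME n. a \<in> E n) = n"
      using E(1) that unfolding disjoint_family_on_def by blast
    then show ?thesis
      using that by (auto simp: k_def)
  qed
  have "k \<in> Pi A cyc"
  proof
    fix a assume "a \<in> A"
    show "k a \<in> cyc a"
    proof (cases "\<exists>n. a \<in> E n")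
      case True
      then obtain n where "a \<in> E n" by blast
      then show ?thesis
        using k_eq H(1)[of n] by auto
    next
      case False
      then show ?thesis by (simp add: k_def zero_cyc)
    qed
  qed
  then obtain F where F: "finite F" "F \<subseteq> A"
    "\<And>E. finite E \<Longrightarrow> E \<subseteq> A - F \<Longrightarrow> sum k E \<in> W"
    using summable_on_imp_cauchy_tail[OF abs_summable_summable_on[OF assms(1)] assms(2,3)]
    by blast
  obtain n where "n \<notin> {n. E n \<inter> F \<noteq> {}}"
    using ex_new_if_finite[OF infinite_UNIV_nat disjoint_family_finite_meets[OF E(1) F(1)]]
    by blast
  then have "sum k (E n) \<in> W"
    using F(3)[OF E(2)] E(3)[of n] by blast
  moreover have "sum k (E n) = sum (H n) (E n)"
    by (intro sum.cong refl k_eq)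
  ultimately show False
    using H(2) by simp
qed

lemma topspace_PA: "topspace (PA A) = (\<Pi>\<^sub>E a\<in>A. cyc a)"
  unfolding PA_def by simp

lemma continuous_map_PA_coordinate:
  assumes "a \<in> A"
  shows "continuous_map (PA A) euclidean (\<lambda>h. h a)"
  unfolding PA_def
  using continuous_map_product_projection[OF assms] by (rule continuous_map_into_fulltopology)

lemma infsum_minus_sum_in_closure:
  fixes A :: "'a::{topological_ab_group_add,t2_space} set"
  assumes "abs_summable A" "h \<in> topspace (PA A)" "finite F" "F \<subseteq> A"
    and tail: "\<forall>E h. finite E \<and> E \<subseteq> A - F \<and> h \<in> Pi E cyc \<longrightarrow> sum h E \<in> W"
  shows "infsum h A - sum h F \<in> closure W"
proof -
  have h: "h \<in> Pi A cyc"
    using assms(2) by (simp add: topspace_PA PiE_def)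
  then have "(h has_sum infsum h A) A"
    using abs_summable_summable_on[OF assms(1)] by simp
  then have "(h has_sum (infsum h A - sum h F)) (A - F)"
    using has_sum_Diff has_sum_finite[OF assms(3)] assms(4) by blast
  moreover have "eventually (\<lambda>E. sum h E \<in> closure W) (finite_subsets_at_top (A - F))"
  proof (rule eventually_finite_subsets_at_top_weakI)
    fix E assume "finite E" "E \<subseteq> A - F"
    moreover have "h \<in> Pi E cyc"
      using h \<open>E \<subseteq> A - F\<close> by (auto simp: Pi_def)
    ultimately have "sum h E \<in> W"
      using tail by blast
    then show "sum h E \<in> closure W"
      using closure_subset by blast
  qed
  ultimately show ?thesis
    unfolding has_sum_def by (rule Lim_in_closed_set[OF closed_closure, rotated -1]) simp
qed

lemma abs_summable_continuous_infsum:
  fixes A :: "'a::{topological_ab_group_add,t2_space} set"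
  assumes "abs_summable A"
  shows "continuous_map (PA A) euclidean (\<lambda>h. infsum h A)"
  unfolding continuous_map_atin limitin_canonical_iff
proof
  fix h0 assume h0: "h0 \<in> topspace (PA A)"
  have "((\<lambda>h. infsum h A - infsum h0 A) \<longlongrightarrow> 0) (atin (PA A) h0)"
  proof (rule topological_tendstoI)
    fix U :: "'a set" assume U: "open U" "0 \<in> U"
    obtain D where D: "open D" "0 \<in> D"
      "\<And>x y z. x \<in> D \<Longrightarrow> y \<in> D \<Longrightarrow> z \<in> D \<Longrightarrow> x + y - z \<in> U"
      using zero_nhd_add_diff_subset[OF U] by blast
    obtain W where W: "open W" "0 \<in> W" "closure W \<subseteq> D"
      using zero_nhd_closure_subset[OF D(1,2)] by blast
    obtain F where F: "finite F" "F \<subseteq> A"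
      "\<forall>E h. finite E \<and> E \<subseteq> A - F \<and> h \<in> Pi E cyc \<longrightarrow> sum h E \<in> W"
      using abs_summable_uniform_tail[OF assms W(1,2)] by blast
    have "((\<lambda>h. sum h F) \<longlongrightarrow> sum h0 F) (atin (PA A) h0)"
      using h0 continuous_map_PA_coordinate F(2)
      by (intro tendsto_sum) (auto simp: continuous_map_atin subset_eq)
    then have "((\<lambda>h. sum h F - sum h0 F) \<longlongrightarrow> 0) (atin (PA A) h0)"
      using tendsto_diff[OF _ tendsto_const, of "\<lambda>h. sum h F" "sum h0 F" _ "sum h0 F"] by simp
    then have "eventually (\<lambda>h. sum h F - sum h0 F \<in> D) (atin (PA A) h0)"
      by (rule topological_tendstoD[OF _ D(1,2)])
    moreover have "eventually (\<lambda>h. h \<in> topspace (PA A)) (atin (PA A) h0)"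
      unfolding eventually_atin using h0 by auto
    ultimately show "eventually (\<lambda>h. infsum h A - infsum h0 A \<in> U) (atin (PA A) h0)"
    proof eventually_elim
      case (elim h)
      have "infsum h A - sum h F \<in> D" "infsum h0 A - sum h0 F \<in> D"
        using infsum_minus_sum_in_closure[OF assms _ F] elim(2) h0 W(3) by blast+
      then have "(sum h F - sum h0 F) + (infsum h A - sum h F) - (infsum h0 A - sum h0 F) \<in> U"
        using D(3) elim(1) by blast
      then show ?case
        by (simp add: algebra_simps)
    qed
  qed
  then show "((\<lambda>h. infsum h A) \<longlongrightarrow> infsum h0 A) (atin (PA A) h0)"
    using tendsto_add[OF _ tendsto_const, of "\<lambda>h. infsum h A - infsum h0 A" 0 _ "infsum h0 A"]
    by simp
qed

lemma kalton_has_sum: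
  assumes "h \<in> SA A"
  shows "(h has_sum kalton A h) A"
proof -
  have "finite {a \<in> A. h a \<noteq> 0}"
    using assms unfolding SA_def by blast
  then have "(h has_sum kalton A h) {a \<in> A. h a \<noteq> 0}"
    unfolding kalton_def by (rule has_sum_finite)
  then show ?thesis
    by (rule has_sum_cong_neutral[THEN iffD1, rotated -1]) auto
qed

lemma kalton_coord:
  assumes "a \<in> A"
  shows "kalton A (coord A a x) = x"
proof -
  have "{b \<in> A. coord A a x b \<noteq> 0} = (if x = 0 then {} else {a})"
    using assms unfolding coord_def by auto
  then show ?thesis
    unfolding kalton_def using assms by (simp add: coord_def)
qed

text \<open>The value \<open>undefined\<close> off \<open>A\<close> keeps truncations in the extensional carrier of \<open>P\<^sub>A\<close>.\<close>

definition truncation :: "'a::zero set \<Rightarrow> ('a \<Rightarrow> 'a) \<Rightarrow> 'a set \<Rightarrow> 'a \<Rightarrow> 'a" where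
  "truncation A h E = (\<lambda>b. if b \<in> A then (if b \<in> E then h b else 0) else undefined)"

lemma truncation_in_topspace:
  assumes "h \<in> topspace (PA A)"
  shows "truncation A h E \<in> topspace (PA A)"
  using assms zero_cyc unfolding topspace_PA truncation_def
  by (auto simp: PiE_def Pi_def extensional_def)

lemma truncation_in_SA:
  assumes "h \<in> topspace (PA A)" "finite E"
  shows "truncation A h E \<in> SA A"
proof -
  have "{a \<in> A. truncation A h E a \<noteq> 0} \<subseteq> E"
    unfolding truncation_def by auto
  then show ?thesis
    unfolding SA_def using truncation_in_topspace[OF assms(1)] finite_subset assms(2) by blast
qed

lemma kalton_truncation:
  assumes "finite E" "E \<subseteq> A"
  shows "kalton A (truncation A h E) = sum h E"
proof -
  have "kalton A (truncation A h E) = sum h {a \<in> E. h a \<noteq> 0}"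
    unfolding kalton_def using assms(2)
    by (intro sum.cong) (auto simp: truncation_def)
  also have "\<dots> = sum h E"
    using assms(1) by (intro sum.mono_neutral_left) auto
  finally show ?thesis .
qed

lemma limitin_truncation:
  assumes h: "h \<in> topspace (PA A)"
  shows "limitin (PA A) (truncation A h) h (finite_subsets_at_top A)"
  unfolding PA_def limitin_componentwise
proof (intro conjI ballI)
  show "h \<in> extensional A"
    using h unfolding topspace_PA by (simp add: PiE_def)
  show "eventually (\<lambda>E. truncation A h E \<in> topspace (product_topology (\<lambda>a. subtopology euclidean (cyc a)) A))
     (finite_subsets_at_top A)"
    using truncation_in_topspace[OF h] unfolding PA_def by simp
  fix a assume a: "a \<in> A"
  have "eventually (\<lambda>E. a \<in> E) (finite_subsets_at_top A)"
    unfolding eventually_finite_subsets_at_top using a by (intro exI[of _ "{a}"]) auto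
  then have "eventually (\<lambda>E. truncation A h E a = h a) (finite_subsets_at_top A)"
    by eventually_elim (simp add: truncation_def a)
  then have "((\<lambda>E. truncation A h E a) \<longlongrightarrow> h a) (finite_subsets_at_top A)"
    by (rule tendsto_eventually)
  moreover have "h a \<in> cyc a" "\<forall>E. truncation A h E a \<in> cyc a"
    using h truncation_in_topspace[OF h] a unfolding topspace_PA by auto
  ultimately show "limitin (subtopology euclidean (cyc a)) (\<lambda>E. truncation A h E a) (h a)
     (finite_subsets_at_top A)"
    unfolding limitin_subtopology by simp
qed

lemma kalton_ext_tendsto:
  assumes g: "kalton_ext A j g" and h: "h \<in> topspace (PA A)"
  shows "((\<lambda>E. j (sum h E)) \<longlongrightarrow> g h) (finite_subsets_at_top A)"
proof -
  have "continuous_map (PA A) euclidean g"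
    using g unfolding kalton_ext_def by blast
  then have "limitin euclidean (g \<circ> truncation A h) (g h) (finite_subsets_at_top A)"
    using limitin_truncation[OF h] by (rule continuous_map_limit)
  then have "((\<lambda>E. g (truncation A h E)) \<longlongrightarrow> g h) (finite_subsets_at_top A)"
    by (simp add: o_def)
  moreover have "eventually (\<lambda>E. g (truncation A h E) = j (sum h E)) (finite_subsets_at_top A)"
  proof (rule eventually_finite_subsets_at_top_weakI)
    fix E assume "finite E" "E \<subseteq> A"
    then show "g (truncation A h E) = j (sum h E)"
      using g truncation_in_SA[OF h] kalton_truncation unfolding kalton_ext_def by metis
  qed
  ultimately show ?thesis
    by (rule tendsto_cong[THEN iffD1, rotated])
qed

lemma tendsto_embedding_iff:
  assumes "homeomorphic_map euclidean (subtopology euclidean (range j)) j"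
  shows "((\<lambda>x. j (f x)) \<longlongrightarrow> j s) F \<longleftrightarrow> (f \<longlongrightarrow> s) F"
proof -
  obtain j' where "homeomorphic_maps euclidean (subtopology euclidean (range j)) j j'"
    using assms unfolding homeomorphic_map_maps by blast
  then have j: "continuous_map euclidean (subtopology euclidean (range j)) j"
    and j': "continuous_map (subtopology euclidean (range j)) euclidean j'"
    and j'_j: "\<And>x. j' (j x) = x"
    unfolding homeomorphic_maps_def by auto
  show ?thesis
  proof
    assume "((\<lambda>x. j (f x)) \<longlongrightarrow> j s) F"
    then have "limitin (subtopology euclidean (range j)) (\<lambda>x. j (f x)) (j s) F"
      unfolding limitin_subtopology by simp
    then have "limitin euclidean (j' \<circ> (\<lambda>x. j (f x))) (j' (j s)) F"
      by (rule continuous_map_limit[OF j'])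
    then show "(f \<longlongrightarrow> s) F"
      by (simp add: o_def j'_j)
  next
    assume "(f \<longlongrightarrow> s) F"
    then show "((\<lambda>x. j (f x)) \<longlongrightarrow> j s) F"
      using continuous_map_limit[OF continuous_map_into_fulltopology[OF j], of f s F]
      by (simp add: o_def)
  qed
qed

lemma abs_summable_continuous_kalton:
  fixes A :: "'a::{topological_ab_group_add,t2_space} set"
  assumes "abs_summable A"
  shows "continuous_map (subtopology (PA A) (SA A)) euclidean (kalton A)"
proof (rule continuous_map_eq)
  show "continuous_map (subtopology (PA A) (SA A)) euclidean (\<lambda>h. infsum h A)"
    using abs_summable_continuous_infsum[OF assms] by (rule continuous_map_from_subtopology)
  fix h assume "h \<in> topspace (subtopology (PA A) (SA A))"
  then have "h \<in> SA A" by simp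
  then show "infsum h A = kalton A h"
    using kalton_has_sum infsumI by blast
qed

lemma abs_summable_kalton_ext:
  fixes A :: "'a::{topological_ab_group_add,t2_space} set"
  assumes "abs_summable A" "continuous_map euclidean euclidean j"
  shows "kalton_ext A j (\<lambda>h. j (infsum h A))"
  unfolding kalton_ext_def
proof
  show "continuous_map (PA A) euclidean (\<lambda>h. j (infsum h A))"
    using continuous_map_compose[OF abs_summable_continuous_infsum[OF assms(1)] assms(2)]
    by (simp add: o_def)
  show "\<forall>h\<in>SA A. j (infsum h A) = j (kalton A h)"
    using kalton_has_sum infsumI by metis
qed

lemma kalton_ext_eq_infsum:
  fixes A :: "'a::{topological_ab_group_add,t2_space} set"
    and j :: "'a \<Rightarrow> 'b::{topological_ab_group_add,t2_space}"
  assumes "abs_summable A" "continuous_map euclidean euclidean j"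
    and "kalton_ext A j g" "h \<in> topspace (PA A)"
  shows "g h = j (infsum h A)"
proof -
  have "h \<in> Pi A cyc"
    using assms(4) by (simp add: topspace_PA PiE_def)
  then have "(sum h \<longlongrightarrow> infsum h A) (finite_subsets_at_top A)"
    using abs_summable_summable_on[OF assms(1)] by (simp add: has_sum_def[symmetric])
  then have "((\<lambda>E. j (sum h E)) \<longlongrightarrow> j (infsum h A)) (finite_subsets_at_top A)"
    using continuous_map_limit[OF assms(2)] by (simp add: o_def)
  then show ?thesis
    using tendsto_unique[OF finite_subsets_at_top_neq_bot kalton_ext_tendsto[OF assms(3,4)]] by blast
qed

lemma kalton_ext_coord_has_sum:
  fixes A :: "'a::{topological_ab_group_add,t2_space} set"
    and j :: "'a \<Rightarrow> 'b::{topological_ab_group_add,t2_space}"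
  assumes "abs_summable A" "continuous_map euclidean euclidean j"
    and "kalton_ext A j g" "h \<in> topspace (PA A)"
  shows "\<exists>s. ((\<lambda>a. kalton A (coord A a (h a))) has_sum s) A \<and> g h = j s"
proof (intro exI conjI)
  have "h \<in> Pi A cyc"
    using assms(4) by (simp add: topspace_PA PiE_def)
  then have "(h has_sum infsum h A) A"
    using abs_summable_summable_on[OF assms(1)] by simp
  then show "((\<lambda>a. kalton A (coord A a (h a))) has_sum infsum h A) A"
    by (rule has_sum_cong[THEN iffD2, rotated]) (simp add: kalton_coord)
  show "g h = j (infsum h A)"
    using kalton_ext_eq_infsum[OF assms] .
qed

lemma kalton_ext_range_imp_abs_summable:
  assumes "homeomorphic_map euclidean (subtopology euclidean (range j)) j"
    and "kalton_ext A j g" "g ` topspace (PA A) \<subseteq> range j"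
  shows "abs_summable A"
  unfolding abs_summable_def
proof
  fix z :: "'a \<Rightarrow> int"
  define h where "h = restrict (\<lambda>a. zsmult (z a) a) A"
  have h: "h \<in> topspace (PA A)"
    unfolding topspace_PA h_def cyc_def by auto
  then obtain s where "g h = j s"
    using assms(3) by blast
  then have "((\<lambda>E. j (sum h E)) \<longlongrightarrow> j s) (finite_subsets_at_top A)"
    using kalton_ext_tendsto[OF assms(2) h] by simp
  then have "(sum h \<longlongrightarrow> s) (finite_subsets_at_top A)"
    by (rule tendsto_embedding_iff[OF assms(1), THEN iffD1])
  then have "(h has_sum s) A"
    unfolding has_sum_def .
  then have "((\<lambda>a. zsmult (z a) a) has_sum s) A"
    by (rule has_sum_cong[THEN iffD1, rotated]) (simp add: h_def)
  then show "\<exists>s. ((\<lambda>a. zsmult (z a) a) has_sum s) A" ..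
qed

theorem proposition7p1:
  fixes A :: "'g::{topological_ab_group_add,t2_space} set"
    and j :: "'g \<Rightarrow> 'h::{topological_ab_group_add,t2_space}"
  assumes "0 \<notin> A"
    and "is_completion j"
  shows "(abs_summable A \<longleftrightarrow>
            (continuous_map (subtopology (PA A) (SA A)) euclidean (kalton A) \<and>
             (\<exists>g. kalton_ext A j g \<and> g ` topspace (PA A) \<subseteq> range j)))
       \<and> (abs_summable A \<longrightarrow>
            (\<forall>g. kalton_ext A j g \<longrightarrow>
               (\<forall>h \<in> topspace (PA A). \<exists>s.
                  ((\<lambda>a. kalton A (coord A a (h a))) has_sum s) A \<and> g h = j s)))"
proof -
  have embedding: "homeomorphic_map euclidean (subtopology euclidean (range j)) j"
    using assms(2) unfolding is_completion_def by blast
  then have j: "continuous_map euclidean euclidean j"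
    by (metis continuous_map_into_fulltopology homeomorphic_imp_continuous_map)
  have "continuous_map (subtopology (PA A) (SA A)) euclidean (kalton A) \<and>
      (\<exists>g. kalton_ext A j g \<and> g ` topspace (PA A) \<subseteq> range j)" if "abs_summable A"
  proof (intro conjI exI)
    show "continuous_map (subtopology (PA A) (SA A)) euclidean (kalton A)"
      using abs_summable_continuous_kalton[OF that] .
    show "kalton_ext A j (\<lambda>h. j (infsum h A))"
      using abs_summable_kalton_ext[OF that j] .
    show "(\<lambda>h. j (infsum h A)) ` topspace (PA A) \<subseteq> range j"
      by blast
  qed
  then show ?thesis
    using kalton_ext_range_imp_abs_summable[OF embedding] kalton_ext_coord_has_sum[OF _ j]
    by blast
qed

end
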